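(* Let $n,m,l$ be positive integers, $f:\mathbb{R}^n\times\mathbb{R}^m\to\mathbb{R}^n$ smooth with $f(0,0)=0$, $g_1,\dots,g_l:\mathbb{R}^n\times\mathbb{R}^m\to\mathbb{R}$ smooth with $g_i(0,0)=0$, and let $N_1,\dots,N_l\in\{1,\dots,n\}$ be pairwise distinct. Consider the system $$\dot x=f(x,u)+g_1(x,u)\theta_1e_{N_1}+\dots+g_l(x,u)\theta_le_{N_l},\qquad x\in\mathbb{R}^n,\ u\in\mathbb{R}^m,$$ with $e_1,\dots,e_n$ the standard basis of $\mathbb{R}^n$ and unknown constant $\theta=(\theta_1,\dots,\theta_l)'\in\mathbb{R}^l$, and let $k:\mathbb{R}^l\times\mathbb{R}^n\to\mathbb{R}^m$ be smooth with $k(\vartheta,0)=0$ for all $\vartheta$. Suppose that for every $\theta,\hat\theta_1,\dots,\hat\theta_l\in\mathbb{R}^l$ the sets $I_1,\dots,I_l$ produced by the algorithm in the context satisfy $I_1\cup\dots\cup I_l=\{1,\dots,l\}$. Then the following holds (with $N=l$ and $g(x,u)$ the $n\times l$ matrix whose $p$-th column is $g_p(x,u)e_{N_p}$): if there exist times $0=\tau_0<\tau_1<\dots<\tau_l$, vectors $\theta,d_0,\dots,d_l\in\mathbb{R}^l$ with $d_i\ne0$ for $i=0,\dots,l$, and a right differentiable $x\in C^0([0,\tau_l];\mathbb{R}^n)\cap C^1([0,\tau_l]\setminus\{\tau_0,\dots,\tau_l\};\mathbb{R}^n)$ satisfying $\dot x(t)=f(x(t),k(\theta+d_i,x(t)))+g(x(t),k(\theta+d_i,x(t)))\theta$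 for $t\in[\tau_i,\tau_{i+1})$, $i=0,\dots,l-1$, and $g(x(t),k(\theta+d_j,x(t)))d_{i+1}=0$ for all $t\in[\tau_j,\tau_{j+1}]$, $i=0,\dots,l-1$, $j=0,\dots,i$, then $x(t)=0$ for all $t\in[0,\tau_l]$.
   Context: Algorithm: given $\theta,\hat\theta_1,\dots,\hat\theta_l\in\mathbb{R}^l$, for $z\in\mathbb{R}^l$ define the vector field $F_z(x)=f(x,k(z,x))+\sum_{i=1}^lg_i(x,k(z,x))\theta_ie_{N_i}$. For a given $z$, say index $i\in\{1,\dots,l\}$ satisfies the implication ( * ) if: whenever $x\in\mathbb{R}^n$ satisfies $h_i(x)=0$ and $L_{F_z}^{(j)}h_i(x)=0$ for all $j=1,2,\dots$, where $h_i(x):=g_i(x,k(z,x))$, then $x=0$. Here $L_Fh=\nabla h\,F$ is the Lie derivative and $L_F^{(j)}h=L_FL_F^{(j-1)}h$, $L_F^{(1)}h=L_Fh$. Step 1: set $z=\hat\theta_1$ and let $I_1$ be the set of indices $i$ satisfying ( * ). Step $s>1$: set $z=\hat\theta_s$, then replace the component $z_i$ by $\theta_i$ for every $i\in I_1\cup\dots\cup I_{s-1}$; let $I_s$ be the set of indices $i$ satisfying ( * ) for this $z$. *)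

theory Defs
  imports "HOL-Analysis.Analysis"
begin

fun iter_dderiv :: "('a::real_normed_vector \<Rightarrow> 'b::real_normed_vector) \<Rightarrow> 'a list \<Rightarrow> 'a \<Rightarrow> 'b" where
  "iter_dderiv f [] = f"
| "iter_dderiv f (v # vs) = (\<lambda>x. frechet_derivative (iter_dderiv f vs) (at x) v)"

definition smooth :: "('a::real_normed_vector \<Rightarrow> 'b::real_normed_vector) \<Rightarrow> bool" where
  "smooth f \<longleftrightarrow> (\<forall>vs x. iter_dderiv f vs differentiable (at x))"

fun lie_deriv :: "('a::real_normed_vector \<Rightarrow> 'a) \<Rightarrow> ('a \<Rightarrow> real) \<Rightarrow> nat \<Rightarrow> 'a \<Rightarrow> real" where
  "lie_deriv F h 0 = h"
| "lie_deriv F h (Suc j) = (\<lambda>x. frechet_derivative (lie_deriv F h j) (at x) (F x))"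

definition gtheta :: "('l::finite \<Rightarrow> real^'n \<Rightarrow> real^'m \<Rightarrow> real) \<Rightarrow> ('l \<Rightarrow> 'n::finite)
     \<Rightarrow> real^'n \<Rightarrow> real^'m \<Rightarrow> real^'l \<Rightarrow> real^'n" where
  "gtheta g N x u th = (\<Sum>p\<in>UNIV. (g p x u * th $ p) *\<^sub>R axis (N p) 1)"

definition Fz :: "(real^'n \<Rightarrow> real^'m \<Rightarrow> real^'n) \<Rightarrow> ('l::finite \<Rightarrow> real^'n \<Rightarrow> real^'m \<Rightarrow> real)
     \<Rightarrow> ('l \<Rightarrow> 'n::finite) \<Rightarrow> (real^'l \<Rightarrow> real^'n \<Rightarrow> real^'m) \<Rightarrow> real^'l \<Rightarrow> real^'l
     \<Rightarrow> real^'n \<Rightarrow> real^'n" where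
  "Fz f g N k th z x = f x (k z x) + gtheta g N x (k z x) th"

definition star_prop :: "(real^'n \<Rightarrow> real^'m \<Rightarrow> real^'n) \<Rightarrow> ('l::finite \<Rightarrow> real^'n \<Rightarrow> real^'m \<Rightarrow> real)
     \<Rightarrow> ('l \<Rightarrow> 'n::finite) \<Rightarrow> (real^'l \<Rightarrow> real^'n \<Rightarrow> real^'m) \<Rightarrow> real^'l \<Rightarrow> real^'l \<Rightarrow> 'l \<Rightarrow> bool" where
  "star_prop f g N k th z i \<longleftrightarrow>
     (\<forall>x. (g i x (k z x) = 0 \<and> (\<forall>j\<ge>1. lie_deriv (Fz f g N k th z) (\<lambda>y. g i y (k z y)) j x = 0))
          \<longrightarrow> x = 0)"

text \<open>alg_union ... s = I_1 \<union> ... \<union> I_s (steps s = 1..l use hat s).\<close>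
fun alg_union :: "(real^'n \<Rightarrow> real^'m \<Rightarrow> real^'n) \<Rightarrow> ('l::finite \<Rightarrow> real^'n \<Rightarrow> real^'m \<Rightarrow> real)
     \<Rightarrow> ('l \<Rightarrow> 'n::finite) \<Rightarrow> (real^'l \<Rightarrow> real^'n \<Rightarrow> real^'m) \<Rightarrow> real^'l \<Rightarrow> (nat \<Rightarrow> real^'l)
     \<Rightarrow> nat \<Rightarrow> 'l set" where
  "alg_union f g N k th hat 0 = {}"
| "alg_union f g N k th hat (Suc s) =
     alg_union f g N k th hat s \<union>
     {i. star_prop f g N k th
           (\<chi> r. if r \<in> alg_union f g N k th hat s then th $ r else hat (Suc s) $ r) i}"

end

theory Submission
  imports Defs
begin

text \<open>If the trajectory vanished at one instant it would vanish identically: every closed-loop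
  field \<open>F\<^sub>j\<close> fixes the origin and is differentiable there, so a Gronwall estimate makes the zero set
  of \<open>x\<close> open in \<open>[0, \<tau>\<^sub>l]\<close>, and it is closed by continuity. So, arguing by contradiction, \<open>x\<close> never
  vanishes. On \<open>(\<tau>\<^sub>j, \<tau>\<^sub>j\<^sub>+\<^sub>1)\<close> the constraints force \<open>h\<^sub>p(x t) = 0\<close> for every \<open>p\<close> in the support of some
  \<open>d\<^sub>i\<^sub>+\<^sub>1\<close> with \<open>i \<ge> j\<close>; then all Lie derivatives of \<open>h\<^sub>p\<close> along \<open>F\<^sub>j\<close> vanish at the nonzero point
  \<open>x t\<close>, so \<open>p\<close> fails (*) for \<open>z = \<theta> + d\<^sub>j\<close>. Feeding the algorithm \<open>\<theta>\<^sub>s = \<theta> + d\<^sub>s\<^sub>-\<^sub>1\<close>, induction on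
  \<open>s\<close> shows that \<open>d\<^sub>s, \<dots>, d\<^sub>l\<close> vanish on \<open>I\<^sub>1 \<union> \<dots> \<union> I\<^sub>s\<close>; for \<open>s = l\<close> this gives \<open>d\<^sub>l = 0\<close>.\<close>

section \<open>Smooth functions\<close>

fun differentiable_to_order :: "nat \<Rightarrow> ('a::real_normed_vector \<Rightarrow> 'b::real_normed_vector) \<Rightarrow> bool" where
  "differentiable_to_order 0 f = True"
| "differentiable_to_order (Suc n) f \<longleftrightarrow>
     (\<forall>x. f differentiable (at x)) \<and>
     (\<forall>v. differentiable_to_order n (\<lambda>x. frechet_derivative f (at x) v))"

lemma iter_dderiv_snoc:
  "iter_dderiv f (vs @ [v]) = iter_dderiv (\<lambda>x. frechet_derivative f (at x) v) vs"
  by (induction vs) auto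

lemma differentiable_to_order_iter_dderiv:
  "differentiable_to_order (Suc (length vs)) f \<Longrightarrow> iter_dderiv f vs differentiable (at x)"
proof (induction vs arbitrary: f rule: rev_induct)
  case (snoc v vs)
  then show ?case by (simp add: iter_dderiv_snoc)
qed simp

lemma smooth_iff_differentiable_to_order:
  "smooth f \<longleftrightarrow> (\<forall>n. differentiable_to_order n f)"
proof
  show "\<forall>n. differentiable_to_order n f" if "smooth f"
  proof
    show "differentiable_to_order n f" for n
      using that
    proof (induction n arbitrary: f)
      case (Suc n)
      have "smooth (\<lambda>x. frechet_derivative f (at x) v)" for v
        using Suc.prems unfolding smooth_def by (metis iter_dderiv_snoc)
      moreover have "f differentiable (at x)" for x
        using Suc.prems unfolding smooth_def by (metis iter_dderiv.simps(1))
      ultimately show ?case using Suc.IH by simp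
    qed simp
  qed
qed (auto simp: smooth_def intro: differentiable_to_order_iter_dderiv)

lemma differentiable_to_order_Suc_imp:
  "differentiable_to_order (Suc n) f \<Longrightarrow> differentiable_to_order n f"
  by (induction n arbitrary: f) auto

lemma differentiable_to_order_SucD:
  "differentiable_to_order (Suc n) f \<Longrightarrow> (f has_derivative frechet_derivative f (at x)) (at x)"
  by (simp add: frechet_derivative_works[symmetric])

lemma differentiable_to_order_SucI:
  assumes "\<And>x. (f has_derivative f' x) (at x)"
    and "\<And>v. differentiable_to_order n (\<lambda>x. f' x v)"
  shows "differentiable_to_order (Suc n) f"
proof -
  have "(\<lambda>x. frechet_derivative f (at x) v) = (\<lambda>x. f' x v)" for v
    using assms(1) by (metis frechet_derivative_at)
  with assms show ?thesis by (auto simp: differentiable_def)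
qed

lemma linear_euclidean_expansion:
  "linear L \<Longrightarrow> L (v::'a::euclidean_space) = (\<Sum>b\<in>Basis. (v \<bullet> b) *\<^sub>R L b)"
  by (metis (no_types, lifting) euclidean_representation linear_scale linear_sum sum.cong)

lemma differentiable_to_order_const: "differentiable_to_order n (\<lambda>x. c)"
  by (induction n arbitrary: c) auto

lemma differentiable_to_order_bounded_linear:
  assumes "bounded_linear L"
  shows "differentiable_to_order n L"
proof (cases n)
  case (Suc m)
  show ?thesis
    unfolding Suc using assms
    by (intro differentiable_to_order_SucI[where f'="\<lambda>x. L"] differentiable_to_order_const)
      (simp add: bounded_linear_imp_has_derivative)
qed simp

lemma differentiable_to_order_bounded_linear_comp:
  "bounded_linear L \<Longrightarrow> differentiable_to_order n f \<Longrightarrow> differentiable_to_order n (\<lambda>x. L (f x))"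
proof (induction n arbitrary: f)
  case (Suc n)
  show ?case
  proof (rule differentiable_to_order_SucI)
    show "((\<lambda>x. L (f x)) has_derivative (\<lambda>v. L (frechet_derivative f (at x) v))) (at x)" for x
      using Suc.prems by (blast intro: bounded_linear.has_derivative differentiable_to_order_SucD)
    show "differentiable_to_order n (\<lambda>x. L (frechet_derivative f (at x) v))" for v
      using Suc by simp
  qed
qed simp

lemma differentiable_to_order_add:
  "differentiable_to_order n f \<Longrightarrow> differentiable_to_order n g \<Longrightarrow>
   differentiable_to_order n (\<lambda>x. f x + g x)"
proof (induction n arbitrary: f g)
  case (Suc n)
  show ?case
  proof (rule differentiable_to_order_SucI)
    show "((\<lambda>x. f x + g x) has_derivative
        (\<lambda>v. frechet_derivative f (at x) v + frechet_derivative g (at x) v)) (at x)" for x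
      using Suc.prems by (blast intro: has_derivative_add differentiable_to_order_SucD)
    show "differentiable_to_order n
        (\<lambda>x. frechet_derivative f (at x) v + frechet_derivative g (at x) v)" for v
      using Suc by simp
  qed
qed simp

lemma differentiable_to_order_sum:
  "finite S \<Longrightarrow> (\<And>i. i \<in> S \<Longrightarrow> differentiable_to_order n (f i)) \<Longrightarrow>
   differentiable_to_order n (\<lambda>x. \<Sum>i\<in>S. f i x)"
  by (induction S rule: finite_induct)
    (auto intro: differentiable_to_order_add differentiable_to_order_const)

lemma differentiable_to_order_scaleR:
  "differentiable_to_order n (f::_ \<Rightarrow> real) \<Longrightarrow> differentiable_to_order n g \<Longrightarrow>
   differentiable_to_order n (\<lambda>x. f x *\<^sub>R g x)"
proof (induction n arbitrary: f g)
  case (Suc n)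
  have "differentiable_to_order n f" "differentiable_to_order n g"
    using Suc.prems differentiable_to_order_Suc_imp by blast+
  show ?case
  proof (rule differentiable_to_order_SucI)
    show "((\<lambda>x. f x *\<^sub>R g x) has_derivative (\<lambda>v. f x *\<^sub>R frechet_derivative g (at x) v
        + frechet_derivative f (at x) v *\<^sub>R g x)) (at x)" for x
      using Suc.prems by (blast intro: has_derivative_scaleR differentiable_to_order_SucD)
    show "differentiable_to_order n (\<lambda>x. f x *\<^sub>R frechet_derivative g (at x) v
        + frechet_derivative f (at x) v *\<^sub>R g x)" for v
      using Suc \<open>differentiable_to_order n f\<close> \<open>differentiable_to_order n g\<close>
      by (simp add: differentiable_to_order_add)
  qed
qed simp

lemma differentiable_to_order_comp:
  fixes f :: "'b::euclidean_space \<Rightarrow> 'c::real_normed_vector"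
    and g :: "'a::real_normed_vector \<Rightarrow> 'b"
  shows "differentiable_to_order n f \<Longrightarrow> differentiable_to_order n g \<Longrightarrow>
    differentiable_to_order n (\<lambda>x. f (g x))"
proof (induction n arbitrary: f g)
  case (Suc n)
  have dg: "(g has_derivative frechet_derivative g (at x)) (at x)"
    and df: "(f has_derivative frechet_derivative f (at y)) (at y)" for x y
    using Suc.prems by (blast intro: differentiable_to_order_SucD)+
  show ?case
  proof (rule differentiable_to_order_SucI)
    \<comment> \<open>the chain rule, with the outer derivative expanded in the basis of \<open>'b\<close>\<close>
    show "((\<lambda>x. f (g x)) has_derivative (\<lambda>v. \<Sum>b\<in>Basis.
        (frechet_derivative g (at x) v \<bullet> b) *\<^sub>R frechet_derivative f (at (g x)) b)) (at x)" for x
    proof (rule has_derivative_eq_rhs)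
      show "((\<lambda>x. f (g x)) has_derivative
          (\<lambda>v. frechet_derivative f (at (g x)) (frechet_derivative g (at x) v))) (at x)"
        using diff_chain_at[OF dg df] by (simp add: o_def)
    qed (intro ext linear_euclidean_expansion has_derivative_linear[OF df])
    show "differentiable_to_order n (\<lambda>x. \<Sum>b\<in>Basis.
        (frechet_derivative g (at x) v \<bullet> b) *\<^sub>R frechet_derivative f (at (g x)) b)" for v
    proof (rule differentiable_to_order_sum[OF finite_Basis], rule differentiable_to_order_scaleR)
      show "differentiable_to_order n (\<lambda>x. frechet_derivative g (at x) v \<bullet> b)" for b
        using Suc.prems
        by (simp add: differentiable_to_order_bounded_linear_comp[OF bounded_linear_inner_left])
      show "differentiable_to_order n (\<lambda>x. frechet_derivative f (at (g x)) b)" for b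
        using Suc.prems differentiable_to_order_Suc_imp
        by (intro Suc.IH[where f="\<lambda>y. frechet_derivative f (at y) b"]) auto
    qed
  qed
qed simp

lemma smooth_imp_differentiable: "smooth f \<Longrightarrow> f differentiable (at x)"
  unfolding smooth_def by (metis iter_dderiv.simps(1))

lemma smooth_const: "smooth (\<lambda>x. c)"
  by (simp add: smooth_iff_differentiable_to_order differentiable_to_order_const)

lemma smooth_bounded_linear: "bounded_linear L \<Longrightarrow> smooth L"
  by (simp add: smooth_iff_differentiable_to_order differentiable_to_order_bounded_linear)

lemma smooth_bounded_linear_comp: "bounded_linear L \<Longrightarrow> smooth f \<Longrightarrow> smooth (\<lambda>x. L (f x))"
  by (simp add: smooth_iff_differentiable_to_order differentiable_to_order_bounded_linear_comp)

lemma smooth_add: "smooth f \<Longrightarrow> smooth g \<Longrightarrow> smooth (\<lambda>x. f x + g x)"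
  by (simp add: smooth_iff_differentiable_to_order differentiable_to_order_add)

lemma smooth_sum: "finite S \<Longrightarrow> (\<And>i. i \<in> S \<Longrightarrow> smooth (f i)) \<Longrightarrow> smooth (\<lambda>x. \<Sum>i\<in>S. f i x)"
  by (simp add: smooth_iff_differentiable_to_order differentiable_to_order_sum)

lemma smooth_scaleR: "smooth (f::_ \<Rightarrow> real) \<Longrightarrow> smooth g \<Longrightarrow> smooth (\<lambda>x. f x *\<^sub>R g x)"
  by (simp add: smooth_iff_differentiable_to_order differentiable_to_order_scaleR)

lemma smooth_comp:
  "smooth (f::'b::euclidean_space \<Rightarrow> 'c::real_normed_vector) \<Longrightarrow> smooth g \<Longrightarrow> smooth (\<lambda>x. f (g x))"
  by (simp add: smooth_iff_differentiable_to_order differentiable_to_order_comp)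

lemma smooth_Pair: "smooth f \<Longrightarrow> smooth g \<Longrightarrow> smooth (\<lambda>x. (f x, g x))"
proof -
  assume "smooth f" "smooth g"
  then have "smooth (\<lambda>x. (f x, 0) + (0, g x))"
    by (intro smooth_add smooth_bounded_linear_comp[where L="\<lambda>p. (p, 0)"]
        smooth_bounded_linear_comp[where L="\<lambda>p. (0, p)"] bounded_linear_Pair
        bounded_linear_ident bounded_linear_zero)
  then show ?thesis by simp
qed

lemma smooth_directional_derivative_along:
  fixes h :: "'a::euclidean_space \<Rightarrow> real" and F :: "'a \<Rightarrow> 'a"
  assumes h: "smooth h" and F: "smooth F"
  shows "smooth (\<lambda>x. frechet_derivative h (at x) (F x))"
proof -
  have "frechet_derivative h (at x) (F x) =
      (\<Sum>b\<in>Basis. (F x \<bullet> b) *\<^sub>R frechet_derivative h (at x) b)" for x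
    using h by (intro linear_euclidean_expansion linear_frechet_derivative smooth_imp_differentiable)
  moreover have "smooth (\<lambda>x. \<Sum>b\<in>Basis. (F x \<bullet> b) *\<^sub>R frechet_derivative h (at x) b)"
  proof (intro smooth_sum smooth_scaleR finite_Basis)
    show "smooth (\<lambda>x. F x \<bullet> b)" for b
      using F by (rule smooth_bounded_linear_comp[OF bounded_linear_inner_left])
    show "smooth (\<lambda>x. frechet_derivative h (at x) b)" for b
      using h unfolding smooth_def by (metis iter_dderiv_snoc)
  qed
  ultimately show ?thesis by simp
qed

lemma smooth_lie_deriv:
  fixes h :: "'a::euclidean_space \<Rightarrow> real" and F :: "'a \<Rightarrow> 'a"
  shows "smooth h \<Longrightarrow> smooth F \<Longrightarrow> smooth (lie_deriv F h j)"
  by (induction j) (simp_all add: smooth_directional_derivative_along)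

lemma smooth_closed_loop:
  fixes \<phi> :: "'a::euclidean_space \<Rightarrow> 'b::euclidean_space \<Rightarrow> 'c::real_normed_vector"
    and k :: "'d::euclidean_space \<Rightarrow> 'a \<Rightarrow> 'b"
  assumes \<phi>: "smooth (\<lambda>(y, u). \<phi> y u)" and k: "smooth (\<lambda>(v, y). k v y)"
  shows "smooth (\<lambda>y. \<phi> y (k z y))"
proof -
  have ident: "smooth (\<lambda>y::'a. y)"
    by (rule smooth_bounded_linear[OF bounded_linear_ident])
  have "smooth (\<lambda>y. (\<lambda>(v, y). k v y) (z, y))"
    by (rule smooth_comp[OF k smooth_Pair[OF smooth_const ident]])
  then have "smooth (\<lambda>y. (\<lambda>(y, u). \<phi> y u) (y, k z y))"
    by (intro smooth_comp[OF \<phi>] smooth_Pair[OF ident]) simp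
  then show ?thesis by simp
qed

lemma smooth_Fz:
  assumes f: "smooth (\<lambda>(y, u). f y u)" and g: "\<And>p. smooth (\<lambda>(y, u). g p y u)"
    and k: "smooth (\<lambda>(v, y). k v y)"
  shows "smooth (Fz f g N k th z)"
proof -
  have "smooth (\<lambda>y. g p y (k z y) * th $ p)" for p
    by (rule smooth_bounded_linear_comp[OF bounded_linear_mult_left smooth_closed_loop[OF g k]])
  then have "smooth (\<lambda>y. gtheta g N y (k z y) th)"
    unfolding gtheta_def by (intro smooth_sum smooth_scaleR smooth_const) simp_all
  then show ?thesis
    unfolding Fz_def by (rule smooth_add[OF smooth_closed_loop[OF f k]])
qed

section \<open>Trajectories through an equilibrium\<close>

lemma has_vector_derivative_at_right_imp_at:
  assumes "x differentiable (at t)" and "(x has_vector_derivative v) (at_right t)"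
  shows "(x has_vector_derivative v) (at t)"
proof -
  have "(x has_vector_derivative vector_derivative x (at t)) (at t)"
    using assms(1) by (simp add: vector_derivative_works)
  moreover have "vector_derivative x (at t) = v"
    by (rule vector_derivative_unique_within[OF _ has_vector_derivative_at_within[OF calculation]
          assms(2)]) simp
  ultimately show ?thesis by simp
qed

lemma linear_bound_near_zero:
  fixes F :: "'a::real_normed_vector \<Rightarrow> 'b::real_normed_vector"
  assumes "F differentiable (at 0)" and "F 0 = 0"
  obtains r L where "r > 0" and "\<And>y. norm y < r \<Longrightarrow> norm (F y) \<le> L * norm y"
proof -
  obtain D where "(F has_derivative D) (at 0)"
    using assms(1) by (auto simp: differentiable_def)
  then have D: "bounded_linear D"
    and approx: "\<forall>e>0. \<exists>d>0. \<forall>y. norm y < d \<longrightarrow> norm (F y - D y) \<le> e * norm y"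
    using assms(2) unfolding has_derivative_at_alt by auto
  obtain r where r: "r > 0" "\<And>y. norm y < r \<Longrightarrow> norm (F y - D y) \<le> norm y"
    using approx[rule_format, of 1] by auto
  obtain K where K: "\<And>y. norm (D y) \<le> norm y * K"
    using bounded_linear.bounded[OF D] by blast
  have "norm (F y) \<le> (K + 1) * norm y" if "norm y < r" for y
    using norm_triangle_ineq[of "F y - D y" "D y"] r(2)[OF that] K[of y]
    by (simp add: algebra_simps)
  with r(1) show ?thesis by (rule that)
qed

text \<open>Gronwall's argument: under \<open>\<parallel>F (x t)\<parallel> \<le> L \<parallel>x t\<parallel>\<close> the function \<open>\<parallel>x t\<parallel>\<^sup>2 e\<^sup>-\<^sup>2\<^sup>L\<^sup>t\<close> is
  non-increasing.\<close>
lemma vanishes_forward_under_linear_bound: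
  fixes x :: "real \<Rightarrow> 'a::real_inner"
  assumes cont: "continuous_on {a..b} x"
    and der: "\<And>t. a < t \<Longrightarrow> t < b \<Longrightarrow> (x has_vector_derivative F (x t)) (at t)"
    and bound: "\<And>t. t \<in> {a..b} \<Longrightarrow> norm (F (x t)) \<le> L * norm (x t)"
    and xa: "x a = 0"
    and t: "t \<in> {a..b}"
  shows "x t = 0"
proof -
  let ?w = "\<lambda>s. (x s \<bullet> x s) * exp (- 2 * L * s)"
  have "?w t \<le> ?w a"
  proof (rule DERIV_nonpos_imp_decreasing_open[of a t ?w])
    fix s assume s: "a < s" "s < t"
    have xs: "(x has_derivative (\<lambda>h. h *\<^sub>R F (x s))) (at s)"
      using der[of s] s t by (simp add: has_vector_derivative_def)
    have "((\<lambda>s. x s \<bullet> x s) has_real_derivative 2 * (x s \<bullet> F (x s))) (at s)"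
      unfolding has_field_derivative_def
      by (rule has_derivative_eq_rhs[OF has_derivative_inner[OF xs xs]])
        (auto simp: fun_eq_iff inner_commute algebra_simps)
    then have "(?w has_real_derivative
        (2 * (x s \<bullet> F (x s)) - 2 * L * (x s \<bullet> x s)) * exp (- 2 * L * s)) (at s)"
      by (auto intro!: derivative_eq_intros simp: algebra_simps)
    moreover have "x s \<bullet> F (x s) \<le> L * (x s \<bullet> x s)"
    proof -
      have "x s \<bullet> F (x s) \<le> norm (x s) * norm (F (x s))" by (rule norm_cauchy_schwarz)
      also have "\<dots> \<le> norm (x s) * (L * norm (x s))"
        using bound[of s] s t by (intro mult_left_mono) auto
      finally show ?thesis by (simp add: power2_norm_eq_inner[symmetric] power2_eq_square algebra_simps)
    qed
    ultimately show "\<exists>y. (?w has_real_derivative y) (at s) \<and> y \<le> 0"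
      by (auto intro!: mult_nonpos_nonneg)
  qed (use t in \<open>auto intro!: continuous_intros continuous_on_subset[OF cont]\<close>)
  then have "x t \<bullet> x t \<le> 0" using xa by (simp add: mult_le_0_iff)
  then show "x t = 0" by (metis inner_eq_zero_iff inner_ge_zero order_antisym)
qed

lemma equilibrium_vanishes_right:
  fixes x :: "real \<Rightarrow> 'a::real_inner"
  assumes F: "F differentiable (at 0)" "F 0 = 0"
    and ab: "a < b" and cont: "continuous_on {a..b} x"
    and der: "\<And>t. a < t \<Longrightarrow> t < b \<Longrightarrow> (x has_vector_derivative F (x t)) (at t)"
    and xa: "x a = 0"
  obtains c where "a < c" "c \<le> b" "\<forall>t\<in>{a..c}. x t = 0"
proof -
  obtain r L where r: "r > 0" and bound: "\<And>y. norm y < r \<Longrightarrow> norm (F y) \<le> L * norm y"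
    using linear_bound_near_zero[OF F] by blast
  obtain \<delta> where \<delta>: "\<delta> > 0" "\<forall>t\<in>{a..b}. dist t a < \<delta> \<longrightarrow> dist (x t) (x a) < r"
    using cont r ab unfolding continuous_on_iff by fastforce
  define c where "c = min b (a + \<delta> / 2)"
  have "x t = 0" if "t \<in> {a..c}" for t
  proof (rule vanishes_forward_under_linear_bound[where x=x and F=F and L=L and b=c, OF _ _ _ xa that])
    show "continuous_on {a..c} x"
      by (rule continuous_on_subset[OF cont]) (auto simp: c_def)
    show "norm (F (x t)) \<le> L * norm (x t)" if "t \<in> {a..c}" for t
      using bound \<delta>(2) that xa \<delta>(1) by (auto simp: c_def dist_real_def)
  qed (use der in \<open>auto simp: c_def\<close>)
  moreover have "a < c" "c \<le> b" using ab \<delta>(1) by (auto simp: c_def)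
  ultimately show ?thesis using that by blast
qed

lemma equilibrium_vanishes_left:
  fixes x :: "real \<Rightarrow> 'a::real_inner"
  assumes F: "F differentiable (at 0)" "F 0 = 0"
    and ab: "a < b" and cont: "continuous_on {a..b} x"
    and der: "\<And>t. a < t \<Longrightarrow> t < b \<Longrightarrow> (x has_vector_derivative F (x t)) (at t)"
    and xb: "x b = 0"
  obtains c where "a \<le> c" "c < b" "\<forall>t\<in>{c..b}. x t = 0"
proof -
  \<comment> \<open>reverse time: \<open>x (- t)\<close> solves the equation with field \<open>- F\<close>\<close>
  have "(\<lambda>y. - F y) differentiable (at 0)" "- F 0 = 0"
    using F by (auto intro: differentiable_minus)
  moreover have "continuous_on {-b..-a} (\<lambda>t. x (- t))"
    by (rule continuous_on_compose2[OF cont]) (auto intro: continuous_intros)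
  moreover have "((\<lambda>t. x (- t)) has_vector_derivative - F (x (- t))) (at t)"
    if "-b < t" "t < -a" for t
  proof -
    have "(uminus has_vector_derivative - 1) (at t)"
      by (auto intro!: derivative_eq_intros)
    then show ?thesis
      using vector_diff_chain_at[of uminus "-1" t x, OF _ der] that by (simp add: o_def)
  qed
  ultimately obtain c where "-b < c" "c \<le> -a" "\<forall>t\<in>{-b..c}. x (- t) = 0"
    using equilibrium_vanishes_right[of "\<lambda>y. - F y" "-b" "-a" "\<lambda>t. x (- t)"] ab xb by auto
  then show ?thesis
    by (intro that[of "- c"]) (auto, metis atLeastAtMost_iff minus_minus neg_le_iff_le)
qed

lemma partition_mono:
  fixes \<tau> :: "nat \<Rightarrow> real"
  assumes "\<And>j. j < l \<Longrightarrow> \<tau> j < \<tau> (Suc j)" and "i \<le> j" and "j \<le> l"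
  shows "\<tau> i \<le> \<tau> j"
  using assms(2,3)
proof (induction j)
  case (Suc j)
  then show ?case using assms(1)[of j] by (cases "i = Suc j") auto
qed simp

lemma partition_piece_closed_open:
  fixes \<tau> :: "nat \<Rightarrow> real"
  assumes "\<tau> 0 \<le> t" "t < \<tau> l"
  obtains j where "j < l" "\<tau> j \<le> t" "t < \<tau> (Suc j)"
  using assms
proof (induction l)
  case (Suc l)
  show ?case
  proof (cases "t < \<tau> l")
    case False
    with Suc.prems(2-) show ?thesis by (intro Suc.prems(1)[of l]) auto
  qed (use Suc in \<open>auto intro: less_SucI\<close>)
qed simp

lemma partition_piece_open_closed:
  fixes \<tau> :: "nat \<Rightarrow> real"
  assumes "\<tau> 0 < t" "t \<le> \<tau> l"
  obtains j where "j < l" "\<tau> j < t" "t \<le> \<tau> (Suc j)"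
  using assms
proof (induction l)
  case (Suc l)
  show ?case
  proof (cases "t \<le> \<tau> l")
    case False
    with Suc.prems(2-) show ?thesis by (intro Suc.prems(1)[of l]) auto
  qed (use Suc in \<open>auto intro: less_SucI\<close>)
qed simp

lemma partition_interior_not_node:
  fixes \<tau> :: "nat \<Rightarrow> real"
  assumes tau: "\<And>j. j < l \<Longrightarrow> \<tau> j < \<tau> (Suc j)"
    and "j < l" "\<tau> j < t" "t < \<tau> (Suc j)"
  shows "t \<in> {\<tau> 0..\<tau> l} - \<tau> ` {0..l}"
proof -
  have "t \<noteq> \<tau> i" if "i \<le> l" for i
    using partition_mono[of l \<tau> i j] partition_mono[of l \<tau> "Suc j" i] tau assms(2-4) that
    by (cases "i \<le> j") auto
  moreover have "\<tau> 0 \<le> t" "t \<le> \<tau> l"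
    using partition_mono[of l \<tau> 0 j] partition_mono[of l \<tau> "Suc j" l] tau assms(2-4) by auto
  ultimately show ?thesis by (force simp: image_iff)
qed

lemma vanishes_if_zero_set_open:
  fixes x :: "real \<Rightarrow> 'a::real_normed_vector"
  assumes cont: "continuous_on {a..b} x"
    and zero_open: "\<And>s. s \<in> {a..b} \<Longrightarrow> x s = 0 \<Longrightarrow> \<exists>e>0. \<forall>t\<in>{a..b}. dist t s < e \<longrightarrow> x t = 0"
    and s: "s \<in> {a..b}" "x s = 0"
  shows "\<forall>t\<in>{a..b}. x t = 0"
proof -
  let ?Z = "{t \<in> {a..b}. x t = 0}"
  have "openin (top_of_set {a..b}) ?Z"
    unfolding openin_euclidean_subtopology_iff using zero_open by auto
  moreover have "closedin (top_of_set {a..b}) ?Z"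
    using continuous_closedin_preimage_constant[OF cont] by blast
  ultimately have "?Z = {} \<or> ?Z = {a..b}"
    using connected_clopen[of "{a..b}"] by auto
  with s show ?thesis by auto
qed

lemma piecewise_equilibrium_trajectory_vanishes:
  fixes x :: "real \<Rightarrow> 'a::real_inner" and \<tau> :: "nat \<Rightarrow> real" and F :: "nat \<Rightarrow> 'a \<Rightarrow> 'a"
  assumes tau: "\<And>j. j < l \<Longrightarrow> \<tau> j < \<tau> (Suc j)"
    and F: "\<And>j. j < l \<Longrightarrow> F j differentiable (at 0)" "\<And>j. j < l \<Longrightarrow> F j 0 = 0"
    and cont: "continuous_on {\<tau> 0..\<tau> l} x"
    and der: "\<And>j t. j < l \<Longrightarrow> \<tau> j < t \<Longrightarrow> t < \<tau> (Suc j) \<Longrightarrow>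
      (x has_vector_derivative F j (x t)) (at t)"
    and s: "s \<in> {\<tau> 0..\<tau> l}" "x s = 0"
  shows "\<forall>t\<in>{\<tau> 0..\<tau> l}. x t = 0"
proof (rule vanishes_if_zero_set_open[OF cont _ s])
  let ?I = "{\<tau> 0..\<tau> l}"
  fix s assume zs: "s \<in> ?I" "x s = 0"
  have piece: "{\<tau> j..\<tau> (Suc j)} \<subseteq> ?I" if "j < l" for j
    using partition_mono[of l \<tau> 0 j] partition_mono[of l \<tau> "Suc j" l] tau that by auto
  have "\<exists>e>0. \<forall>t\<in>?I. s \<le> t \<longrightarrow> t < s + e \<longrightarrow> x t = 0"
  proof (cases "s < \<tau> l")
    case True
    obtain j where j: "j < l" "\<tau> j \<le> s" "s < \<tau> (Suc j)"
      by (rule partition_piece_closed_open[of \<tau> s l]) (use zs True in auto)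
    obtain c where "s < c" "\<forall>t\<in>{s..c}. x t = 0"
    proof (rule equilibrium_vanishes_right[OF F[OF j(1)] j(3), where x=x])
      show "continuous_on {s..\<tau> (Suc j)} x"
        using piece[OF j(1)] j zs by (auto intro: continuous_on_subset[OF cont])
      show "(x has_vector_derivative F j (x t)) (at t)" if "s < t" "t < \<tau> (Suc j)" for t
        using der[OF j(1)] j(2) that by auto
    qed (use zs that in auto)
    then show ?thesis by (intro exI[of _ "c - s"]) auto
  qed (use zs in \<open>auto intro: exI[of _ 1]\<close>)
  moreover have "\<exists>e>0. \<forall>t\<in>?I. t \<le> s \<longrightarrow> s - e < t \<longrightarrow> x t = 0"
  proof (cases "\<tau> 0 < s")
    case True
    obtain j where j: "j < l" "\<tau> j < s" "s \<le> \<tau> (Suc j)"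
      by (rule partition_piece_open_closed[of \<tau> s l]) (use zs True in auto)
    obtain c where "c < s" "\<forall>t\<in>{c..s}. x t = 0"
    proof (rule equilibrium_vanishes_left[OF F[OF j(1)] j(2), where x=x])
      show "continuous_on {\<tau> j..s} x"
        using piece[OF j(1)] j zs by (auto intro: continuous_on_subset[OF cont])
      show "(x has_vector_derivative F j (x t)) (at t)" if "\<tau> j < t" "t < s" for t
        using der[OF j(1)] j(3) that by auto
    qed (use zs that in auto)
    then show ?thesis by (intro exI[of _ "s - c"]) auto
  qed (use zs in \<open>auto intro: exI[of _ 1]\<close>)
  ultimately obtain eR eL where "eR > 0" "eL > 0"
    and "\<forall>t\<in>?I. s \<le> t \<longrightarrow> t < s + eR \<longrightarrow> x t = 0" "\<forall>t\<in>?I. t \<le> s \<longrightarrow> s - eL < t \<longrightarrow> x t = 0"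
    by blast
  then show "\<exists>e>0. \<forall>t\<in>?I. dist t s < e \<longrightarrow> x t = 0"
    by (intro exI[of _ "min eR eL"]) (auto simp: dist_real_def)
qed

section \<open>Unobservable parameter directions\<close>

lemma frechet_derivative_zero_along_curve:
  fixes x :: "real \<Rightarrow> 'a::real_normed_vector" and \<phi> :: "'a \<Rightarrow> real"
  assumes \<phi>: "\<phi> differentiable (at (x t))" and x: "(x has_vector_derivative v) (at t)"
    and S: "open S" "t \<in> S" and zero: "\<And>s. s \<in> S \<Longrightarrow> \<phi> (x s) = 0"
  shows "frechet_derivative \<phi> (at (x t)) v = 0"
proof -
  have "((\<lambda>s. \<phi> (x s)) has_derivative (\<lambda>h. frechet_derivative \<phi> (at (x t)) (h *\<^sub>R v))) (at t)"
    using diff_chain_at[OF x[unfolded has_vector_derivative_def] \<phi>[unfolded frechet_derivative_works]]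
    by (simp add: o_def)
  moreover have "((\<lambda>s. \<phi> (x s)) has_derivative (\<lambda>h. 0)) (at t)"
    using has_derivative_transform_within_open[of "\<lambda>s. 0" "\<lambda>h. 0" t UNIV S "\<lambda>s. \<phi> (x s)"] S zero
    by simp
  ultimately have "(\<lambda>h. frechet_derivative \<phi> (at (x t)) (h *\<^sub>R v)) = (\<lambda>h. 0)"
    by (rule has_derivative_unique)
  then show ?thesis by (metis scaleR_one)
qed

lemma lie_deriv_vanishes_along_trajectory:
  assumes diff: "\<And>j y. lie_deriv F h j differentiable (at y)"
    and S: "open S" "t \<in> S"
    and der: "\<And>s. s \<in> S \<Longrightarrow> (x has_vector_derivative F (x s)) (at s)"
    and zero: "\<And>s. s \<in> S \<Longrightarrow> h (x s) = 0"
  shows "lie_deriv F h j (x t) = 0"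
  using S(2)
proof (induction j arbitrary: t)
  case (Suc j)
  then show ?case
    using frechet_derivative_zero_along_curve[OF diff der[OF Suc.prems] S(1)] by simp
qed (use zero in simp)

lemma gtheta_eq_zero_imp_component:
  assumes "inj N" and "gtheta g N y u v = 0" and "v $ p \<noteq> 0"
  shows "g p y u = 0"
proof -
  have "gtheta g N y u v $ N p = (\<Sum>q\<in>UNIV. g q y u * v $ q * (if q = p then 1 else 0))"
    unfolding gtheta_def using assms(1) by (auto simp: axis_def inj_eq intro!: sum.cong)
  also have "\<dots> = g p y u * v $ p"
    by (simp add: if_distrib cong: if_cong)
  finally show ?thesis using assms(2,3) by simp
qed

lemma not_star_prop_of_nonzero_trajectory:
  assumes f: "smooth (\<lambda>(y, u). f y u)" and g: "\<And>p. smooth (\<lambda>(y, u). g p y u)"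
    and k: "smooth (\<lambda>(v, y). k v y)" and N: "inj N"
    and ab: "a < b"
    and der: "\<And>t. a < t \<Longrightarrow> t < b \<Longrightarrow> (x has_vector_derivative Fz f g N k th z (x t)) (at t)"
    and constr: "\<And>t. a < t \<Longrightarrow> t < b \<Longrightarrow> gtheta g N (x t) (k z (x t)) v = 0" "v $ p \<noteq> 0"
    and nonzero: "\<And>t. a < t \<Longrightarrow> t < b \<Longrightarrow> x t \<noteq> 0"
  shows "\<not> star_prop f g N k th z p"
proof -
  let ?t = "(a + b) / 2"
  have "lie_deriv (Fz f g N k th z) (\<lambda>y. g p y (k z y)) j (x ?t) = 0" for j
  proof (rule lie_deriv_vanishes_along_trajectory[where S="{a<..<b}"])
    show "lie_deriv (Fz f g N k th z) (\<lambda>y. g p y (k z y)) j differentiable (at y)" for j y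
      using smooth_lie_deriv[OF smooth_closed_loop[OF g k] smooth_Fz[OF f g k]]
      by (rule smooth_imp_differentiable)
    show "g p (x t) (k z (x t)) = 0" if "t \<in> {a<..<b}" for t
      using constr that by (auto intro: gtheta_eq_zero_imp_component[OF N])
  qed (use ab der in auto)
  moreover have "x ?t \<noteq> 0"
    using nonzero ab by simp
  ultimately show ?thesis
    unfolding star_prop_def by (metis lie_deriv.simps(1))
qed

text \<open>With \<open>\<theta>\<^sub>s = \<theta> + d\<^sub>s\<^sub>-\<^sub>1\<close>, the induction hypothesis makes the parameter \<open>z\<close> of step \<open>s + 1\<close>
  equal to \<open>\<theta> + d\<^sub>s\<close>.\<close>
lemma alg_union_coordinates_vanish:
  assumes not_star: "\<And>s i p. s \<le> i \<Longrightarrow> i < l \<Longrightarrow> d (Suc i) $ p \<noteq> 0 \<Longrightarrow>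
      \<not> star_prop f g N k th (th + d s) p"
  shows "s \<le> i \<Longrightarrow> i \<le> l \<Longrightarrow> r \<in> alg_union f g N k th (\<lambda>s. th + d (s - 1)) s \<Longrightarrow> d i $ r = 0"
proof (induction s arbitrary: i r)
  case (Suc s)
  let ?I = "alg_union f g N k th (\<lambda>s. th + d (s - 1)) s"
  have z: "(\<chi> r. if r \<in> ?I then th $ r else (th + d (Suc s - 1)) $ r) = th + d s"
    using Suc.IH[of s] Suc.prems by (auto simp: vec_eq_iff)
  from Suc.prems(3) have "r \<in> ?I \<or>
      star_prop f g N k th (\<chi> r. if r \<in> ?I then th $ r else (th + d (Suc s - 1)) $ r) r"
    by (simp only: alg_union.simps Un_iff mem_Collect_eq)
  then have "r \<in> ?I \<or> star_prop f g N k th (th + d s) r"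
    by (simp only: z)
  then show ?case
  proof
    assume "r \<in> ?I"
    then show ?thesis using Suc.IH[of i r] Suc.prems by simp
  next
    assume "star_prop f g N k th (th + d s) r"
    then show ?thesis
      using not_star[of s "i - 1" r] Suc.prems(1,2) by (cases i) auto
  qed
qed simp

theorem theorem4p1:
  fixes f :: "real^'n \<Rightarrow> real^'m \<Rightarrow> real^'n"
    and g :: "'l::finite \<Rightarrow> real^'n \<Rightarrow> real^'m \<Rightarrow> real"
    and N :: "'l \<Rightarrow> 'n::finite"
    and k :: "real^'l \<Rightarrow> real^'n \<Rightarrow> real^'m::finite"
    and th :: "real^'l"
    and \<tau> :: "nat \<Rightarrow> real"
    and d :: "nat \<Rightarrow> real^'l"
    and x :: "real \<Rightarrow> real^'n"
  assumes f_smooth: "smooth (\<lambda>(y, u). f y u)"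
    and f0: "f 0 0 = 0"
    and g_smooth: "\<And>p. smooth (\<lambda>(y, u). g p y u)"
    and g0: "\<And>p. g p 0 0 = 0"
    and N_inj: "inj N"
    and k_smooth: "smooth (\<lambda>(v, y). k v y)"
    and k0: "\<And>v. k v 0 = 0"
    and alg: "\<And>th' hat. alg_union f g N k th' hat CARD('l) = UNIV"
    and tau0: "\<tau> 0 = 0"
    and tau_mono: "\<And>i. i < CARD('l) \<Longrightarrow> \<tau> i < \<tau> (Suc i)"
    and d_nz: "\<And>i. i \<le> CARD('l) \<Longrightarrow> d i \<noteq> 0"
    and x_cont: "continuous_on {0..\<tau> CARD('l)} x"
    and x_C1: "\<forall>t \<in> {0..\<tau> CARD('l)} - \<tau> ` {0..CARD('l)}. x differentiable (at t)"
    and x_C1': "continuous_on ({0..\<tau> CARD('l)} - \<tau> ` {0..CARD('l)}) (\<lambda>t. vector_derivative x (at t))"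
    and x_ode: "\<And>i t. i < CARD('l) \<Longrightarrow> t \<in> {\<tau> i..<\<tau> (Suc i)} \<Longrightarrow>
        (x has_vector_derivative
           (f (x t) (k (th + d i) (x t)) + gtheta g N (x t) (k (th + d i) (x t)) th)) (at_right t)"
    and constr: "\<And>i j t. i < CARD('l) \<Longrightarrow> j \<le> i \<Longrightarrow> t \<in> {\<tau> j..\<tau> (Suc j)} \<Longrightarrow>
        gtheta g N (x t) (k (th + d j) (x t)) (d (Suc i)) = 0"
  shows "\<forall>t \<in> {0..\<tau> CARD('l)}. x t = 0"
proof (rule ccontr)
  let ?l = "CARD('l)"
  define F where "F j = Fz f g N k th (th + d j)" for j
  assume "\<not> (\<forall>t \<in> {0..\<tau> ?l}. x t = 0)"
  have der: "(x has_vector_derivative F j (x t)) (at t)"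
    if "j < ?l" "\<tau> j < t" "t < \<tau> (Suc j)" for j t
    using x_C1 partition_interior_not_node[OF tau_mono that] x_ode[of j t] that tau0
    by (intro has_vector_derivative_at_right_imp_at) (auto simp: F_def Fz_def)
  have "F j differentiable (at 0)" for j
    unfolding F_def by (rule smooth_imp_differentiable[OF smooth_Fz[OF f_smooth g_smooth k_smooth]])
  moreover have "F j 0 = 0" for j
    by (simp add: F_def Fz_def gtheta_def f0 g0 k0)
  ultimately have nonzero: "x t \<noteq> 0" if "t \<in> {0..\<tau> ?l}" for t
    using piecewise_equilibrium_trajectory_vanishes[where F=F and s=t and x=x and l="?l" and \<tau>=\<tau>,
        OF tau_mono _ _ _ der] that x_cont tau0 \<open>\<not> (\<forall>t \<in> {0..\<tau> ?l}. x t = 0)\<close> by auto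
  have not_star: "\<not> star_prop f g N k th (th + d j) p"
    if "j \<le> i" "i < ?l" "d (Suc i) $ p \<noteq> 0" for i j p
    using that tau_mono[of j] der[of j] constr[of i j] nonzero
      partition_interior_not_node[where \<tau>=\<tau> and l="?l" and j=j, OF tau_mono] tau0
    by (intro not_star_prop_of_nonzero_trajectory[OF f_smooth g_smooth k_smooth N_inj,
          where x=x and a="\<tau> j" and b="\<tau> (Suc j)" and v="d (Suc i)"]) (auto simp: F_def)
  have "d ?l $ r = 0" for r
    using alg_union_coordinates_vanish[where l="?l" and d=d and s="?l" and i="?l", OF not_star]
      alg[of th "\<lambda>s. th + d (s - 1)"] by simp
  then show False
    using d_nz[of ?l] by (simp add: vec_eq_iff)
qed

end
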